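(* Let $\beta:(H_1,V_1)\to(H_2,V_2)$ be a homomorphism of finite forest algebras and let $\Lambda\subseteq H_1$ be a reachability class. Then there is a reachability class $\Gamma$ of $(H_2,V_2)$ with $\beta(\Lambda)\subseteq\Gamma$. If $\beta$ is onto and $\Lambda$ is a minimal class of $(H_1,V_1)$ with $\beta(\Lambda)\subseteq\Gamma$, then $\beta(\Lambda)=\Gamma$. If, further, $H_2$ is idempotent and commutative, then there is only one such minimal class $\Lambda$.
   Context: A forest algebra $(H,V)$: additive monoid $H$, monoid $V$ acting faithfully on the left, with $g\mapsto g+h$ and $g\mapsto h+g$ in $V$; a homomorphism is a pair of monoid homomorphisms compatible with the action. Throughout, finite forest algebras have idempotent and commutative horizontal monoid. Reachability: $h\le h'$ iff $h=vh'$ for some $v\in V$; reachability classes are the classes of the relation ($h\le h'$ and $h'\le h$), partially ordered by $\le$. "Minimal class with $\beta(\Lambda)\subseteq\Gamma$" means minimal among the classes of $(H_1,V_1)$ whose image lies in $\Gamma$. *)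

theory Defs
  imports Main
begin

record ('h, 'v) fa =
  hcar  :: "'h set"
  hadd  :: "'h \<Rightarrow> 'h \<Rightarrow> 'h"
  hzero :: "'h"
  vcar  :: "'v set"
  vmul  :: "'v \<Rightarrow> 'v \<Rightarrow> 'v"
  vone  :: "'v"
  act   :: "'v \<Rightarrow> 'h \<Rightarrow> 'h"

definition forest_algebra :: "('h, 'v) fa \<Rightarrow> bool" where
  "forest_algebra A \<longleftrightarrow>
     \<comment> \<open>H is a monoid\<close>
     (\<forall>g\<in>hcar A. \<forall>h\<in>hcar A. hadd A g h \<in> hcar A) \<and>
     hzero A \<in> hcar A \<and>
     (\<forall>f\<in>hcar A. \<forall>g\<in>hcar A. \<forall>h\<in>hcar A. hadd A (hadd A f g) h = hadd A f (hadd A g h)) \<and>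
     (\<forall>h\<in>hcar A. hadd A (hzero A) h = h \<and> hadd A h (hzero A) = h) \<and>
     \<comment> \<open>V is a monoid\<close>
     (\<forall>v\<in>vcar A. \<forall>w\<in>vcar A. vmul A v w \<in> vcar A) \<and>
     vone A \<in> vcar A \<and>
     (\<forall>u\<in>vcar A. \<forall>v\<in>vcar A. \<forall>w\<in>vcar A. vmul A (vmul A u v) w = vmul A u (vmul A v w)) \<and>
     (\<forall>v\<in>vcar A. vmul A (vone A) v = v \<and> vmul A v (vone A) = v) \<and>
     \<comment> \<open>left action\<close>
     (\<forall>v\<in>vcar A. \<forall>h\<in>hcar A. act A v h \<in> hcar A) \<and>
     (\<forall>h\<in>hcar A. act A (vone A) h = h) \<and>
     (\<forall>v\<in>vcar A. \<forall>w\<in>vcar A. \<forall>h\<in>hcar A. act A (vmul A v w) h = act A v (act A w h)) \<and>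
     \<comment> \<open>faithfulness\<close>
     (\<forall>v\<in>vcar A. \<forall>w\<in>vcar A. (\<forall>h\<in>hcar A. act A v h = act A w h) \<longrightarrow> v = w) \<and>
     \<comment> \<open>insertion: g |-> g + h and g |-> h + g belong to V\<close>
     (\<forall>h\<in>hcar A. (\<exists>v\<in>vcar A. \<forall>g\<in>hcar A. act A v g = hadd A g h) \<and>
                  (\<exists>v\<in>vcar A. \<forall>g\<in>hcar A. act A v g = hadd A h g))"

definition idem_comm_H :: "('h, 'v) fa \<Rightarrow> bool" where
  "idem_comm_H A \<longleftrightarrow>
     (\<forall>h\<in>hcar A. hadd A h h = h) \<and>
     (\<forall>g\<in>hcar A. \<forall>h\<in>hcar A. hadd A g h = hadd A h g)"

text \<open>Standing convention: finite forest algebras have idempotent and commutative H.\<close>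
definition finite_forest_algebra :: "('h, 'v) fa \<Rightarrow> bool" where
  "finite_forest_algebra A \<longleftrightarrow>
     forest_algebra A \<and> finite (hcar A) \<and> finite (vcar A) \<and> idem_comm_H A"

definition fa_hom :: "('h1, 'v1) fa \<Rightarrow> ('h2, 'v2) fa \<Rightarrow> ('h1 \<Rightarrow> 'h2) \<Rightarrow> ('v1 \<Rightarrow> 'v2) \<Rightarrow> bool" where
  "fa_hom A B bh bv \<longleftrightarrow>
     (\<forall>h\<in>hcar A. bh h \<in> hcar B) \<and>
     (\<forall>g\<in>hcar A. \<forall>h\<in>hcar A. bh (hadd A g h) = hadd B (bh g) (bh h)) \<and>
     bh (hzero A) = hzero B \<and>
     (\<forall>v\<in>vcar A. bv v \<in> vcar B) \<and>
     (\<forall>v\<in>vcar A. \<forall>w\<in>vcar A. bv (vmul A v w) = vmul B (bv v) (bv w)) \<and>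
     bv (vone A) = vone B \<and>
     (\<forall>v\<in>vcar A. \<forall>h\<in>hcar A. bh (act A v h) = act B (bv v) (bh h))"

definition fa_hom_onto :: "('h1, 'v1) fa \<Rightarrow> ('h2, 'v2) fa \<Rightarrow> ('h1 \<Rightarrow> 'h2) \<Rightarrow> ('v1 \<Rightarrow> 'v2) \<Rightarrow> bool" where
  "fa_hom_onto A B bh bv \<longleftrightarrow> bh ` hcar A = hcar B \<and> bv ` vcar A = vcar B"

definition reach :: "('h, 'v) fa \<Rightarrow> 'h \<Rightarrow> 'h \<Rightarrow> bool" where
  "reach A h h' \<longleftrightarrow> h \<in> hcar A \<and> h' \<in> hcar A \<and> (\<exists>v\<in>vcar A. h = act A v h')"

definition reach_class :: "('h, 'v) fa \<Rightarrow> 'h set \<Rightarrow> bool" where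
  "reach_class A L \<longleftrightarrow>
     (\<exists>h\<in>hcar A. L = {h'\<in>hcar A. reach A h h' \<and> reach A h' h})"

definition class_le :: "('h, 'v) fa \<Rightarrow> 'h set \<Rightarrow> 'h set \<Rightarrow> bool" where
  "class_le A L L' \<longleftrightarrow> (\<exists>h\<in>L. \<exists>h'\<in>L'. reach A h h')"

definition minimal_class_into ::
  "('h1, 'v1) fa \<Rightarrow> ('h1 \<Rightarrow> 'h2) \<Rightarrow> 'h2 set \<Rightarrow> 'h1 set \<Rightarrow> bool" where
  "minimal_class_into A bh G L \<longleftrightarrow>
     reach_class A L \<and> bh ` L \<subseteq> G \<and>
     (\<forall>L'. reach_class A L' \<and> bh ` L' \<subseteq> G \<and> class_le A L' L \<longrightarrow> L' = L)"

end

theory Submission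
  imports Defs
begin

text \<open>A homomorphism preserves reachability, so it maps a class into a class. If it is onto,
  every element of \<Gamma> is reachable from \<beta>(h), h \<in> \<Lambda>, through the image of some context,
  so it is the image of an element k reachable from h; the class of k still maps into \<Gamma>,
  and minimality of \<Lambda> puts k in \<Lambda>. For uniqueness, pick h \<in> \<Lambda> and h' \<in> \<Lambda>' with the
  same image: h + h' is reachable from both and, by idempotence of H2, maps to \<beta>(h) \<in> \<Gamma>,
  so minimality identifies its class with both \<Lambda> and \<Lambda>'.\<close>

definition reach_class_of :: "('h, 'v) fa \<Rightarrow> 'h \<Rightarrow> 'h set" where
  "reach_class_of A h = {h'\<in>hcar A. reach A h h' \<and> reach A h' h}"

lemma mem_reach_class_of_iff:
  "x \<in> reach_class_of A h \<longleftrightarrow> x \<in> hcar A \<and> reach A h x \<and> reach A x h"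
  unfolding reach_class_of_def by simp

lemma reach_class_iff: "reach_class A L \<longleftrightarrow> (\<exists>h\<in>hcar A. L = reach_class_of A h)"
  unfolding reach_class_def reach_class_of_def by simp

lemma reach_class_reach_class_of: "h \<in> hcar A \<Longrightarrow> reach_class A (reach_class_of A h)"
  unfolding reach_class_iff by blast

lemma reach_carrier: "reach A h h' \<Longrightarrow> h \<in> hcar A \<and> h' \<in> hcar A"
  unfolding reach_def by blast

lemma forest_algebra_hadd_closed:
  "forest_algebra A \<Longrightarrow> g \<in> hcar A \<Longrightarrow> h \<in> hcar A \<Longrightarrow> hadd A g h \<in> hcar A"
  unfolding forest_algebra_def by (elim conjE) blast

lemma forest_algebra_act_closed:
  "forest_algebra A \<Longrightarrow> v \<in> vcar A \<Longrightarrow> h \<in> hcar A \<Longrightarrow> act A v h \<in> hcar A"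
  unfolding forest_algebra_def by (elim conjE) blast

lemma forest_algebra_act_vmul:
  "forest_algebra A \<Longrightarrow> v \<in> vcar A \<Longrightarrow> w \<in> vcar A \<Longrightarrow> h \<in> hcar A \<Longrightarrow>
    vmul A v w \<in> vcar A \<and> act A (vmul A v w) h = act A v (act A w h)"
  unfolding forest_algebra_def by (elim conjE) blast

lemma forest_algebra_act_vone:
  "forest_algebra A \<Longrightarrow> h \<in> hcar A \<Longrightarrow> vone A \<in> vcar A \<and> act A (vone A) h = h"
  unfolding forest_algebra_def by (elim conjE) blast

lemma forest_algebra_hadd_contexts:
  assumes "forest_algebra A" "h \<in> hcar A"
  shows "(\<exists>v\<in>vcar A. \<forall>g\<in>hcar A. act A v g = hadd A g h) \<and>
    (\<exists>v\<in>vcar A. \<forall>g\<in>hcar A. act A v g = hadd A h g)"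
proof -
  from assms(1) have "\<forall>h\<in>hcar A. (\<exists>v\<in>vcar A. \<forall>g\<in>hcar A. act A v g = hadd A g h) \<and>
    (\<exists>v\<in>vcar A. \<forall>g\<in>hcar A. act A v g = hadd A h g)"
    unfolding forest_algebra_def by (elim conjE)
  with assms(2) show ?thesis
    by blast
qed

lemma reach_refl:
  assumes "forest_algebra A" "h \<in> hcar A"
  shows "reach A h h"
  using forest_algebra_act_vone[OF assms] assms(2) unfolding reach_def by metis

lemma reach_trans:
  assumes "forest_algebra A" "reach A a b" "reach A b c"
  shows "reach A a c"
proof -
  obtain v w where "v \<in> vcar A" "w \<in> vcar A" "a = act A v b" "b = act A w c" "a \<in> hcar A" "c \<in> hcar A"
    using assms(2,3) unfolding reach_def by blast
  with forest_algebra_act_vmul[OF assms(1)] show ?thesis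
    unfolding reach_def by metis
qed

lemma reach_hadd:
  assumes "forest_algebra A" "h \<in> hcar A" "h' \<in> hcar A"
  shows "reach A (hadd A h h') h" and "reach A (hadd A h h') h'"
proof -
  have sum: "hadd A h h' \<in> hcar A"
    using forest_algebra_hadd_closed[OF assms] .
  obtain v where "v \<in> vcar A" "act A v h = hadd A h h'"
    using forest_algebra_hadd_contexts[OF assms(1,3)] assms(2) by blast
  with sum assms(2) show "reach A (hadd A h h') h"
    unfolding reach_def by metis
  obtain u where "u \<in> vcar A" "act A u h' = hadd A h h'"
    using forest_algebra_hadd_contexts[OF assms(1,2)] assms(3) by blast
  with sum assms(3) show "reach A (hadd A h h') h'"
    unfolding reach_def by metis
qed

lemma mem_reach_class_of:
  "forest_algebra A \<Longrightarrow> h \<in> hcar A \<Longrightarrow> h \<in> reach_class_of A h"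
  by (simp add: mem_reach_class_of_iff reach_refl)

lemma reach_class_of_eq:
  assumes "forest_algebra A" "k \<in> reach_class_of A h"
  shows "reach_class_of A k = reach_class_of A h"
proof -
  have "reach A h k" "reach A k h"
    using assms(2) unfolding mem_reach_class_of_iff by simp_all
  then show ?thesis
    unfolding reach_class_of_def by (meson assms(1) reach_trans)
qed

lemma reach_class_eq_reach_class_of:
  assumes "forest_algebra A" "reach_class A L" "h \<in> L"
  shows "L = reach_class_of A h"
  using assms reach_class_of_eq unfolding reach_class_iff by metis

lemma fa_hom_hcar: "fa_hom A B bh bv \<Longrightarrow> h \<in> hcar A \<Longrightarrow> bh h \<in> hcar B"
  unfolding fa_hom_def by simp

lemma fa_hom_reach:
  assumes "fa_hom A B bh bv" "reach A a b"
  shows "reach B (bh a) (bh b)"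
proof -
  obtain v where "v \<in> vcar A" "a = act A v b" "a \<in> hcar A" "b \<in> hcar A"
    using assms(2) unfolding reach_def by blast
  with assms(1) have "bv v \<in> vcar B" "bh a = act B (bv v) (bh b)" "bh a \<in> hcar B" "bh b \<in> hcar B"
    unfolding fa_hom_def by auto
  then show ?thesis
    unfolding reach_def by blast
qed

lemma fa_hom_image_reach_class_of:
  "fa_hom A B bh bv \<Longrightarrow> bh ` reach_class_of A h \<subseteq> reach_class_of B (bh h)"
  unfolding reach_class_of_def using fa_hom_reach reach_carrier by fastforce

lemma fa_hom_image_reach_class_of_subset:
  assumes "fa_hom A B bh bv" "forest_algebra B" "reach_class B G" "bh h \<in> G"
  shows "bh ` reach_class_of A h \<subseteq> G"
  using fa_hom_image_reach_class_of[OF assms(1)] reach_class_eq_reach_class_of[OF assms(2-4)]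
  by simp

lemma fa_hom_onto_reach_lift:
  assumes "fa_hom A B bh bv" "fa_hom_onto A B bh bv" "forest_algebra A"
    "h \<in> hcar A" "reach B g (bh h)"
  obtains k where "reach A k h" "bh k = g"
proof -
  obtain w where "w \<in> vcar B" "g = act B w (bh h)"
    using assms(5) unfolding reach_def by blast
  moreover from this obtain v where "v \<in> vcar A" "w = bv v"
    using assms(2) unfolding fa_hom_onto_def by blast
  ultimately have "bh (act A v h) = g" "reach A (act A v h) h"
    using assms(1,4) forest_algebra_act_closed[OF assms(3) _ assms(4)]
    unfolding fa_hom_def reach_def by auto
  then show ?thesis
    using that by blast
qed

lemma minimal_class_into_reach_class_of_eq:
  assumes "forest_algebra A" "forest_algebra B" "fa_hom A B bh bv" "reach_class B G"
    and min: "minimal_class_into A bh G L"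
    and "h \<in> L" "reach A k h" "bh k \<in> G"
  shows "reach_class_of A k = L"
proof -
  have k: "k \<in> hcar A"
    using reach_carrier[OF assms(7)] by simp
  have "class_le A (reach_class_of A k) L"
    unfolding class_le_def using assms(6,7) mem_reach_class_of[OF assms(1) k] by blast
  with min fa_hom_image_reach_class_of_subset[OF assms(3,2,4,8)] reach_class_reach_class_of[OF k]
  show ?thesis
    unfolding minimal_class_into_def by blast
qed

lemma minimal_class_into_image_eq:
  assumes "forest_algebra A" "forest_algebra B" "fa_hom A B bh bv" "fa_hom_onto A B bh bv"
    "reach_class B G" and min: "minimal_class_into A bh G L"
  shows "bh ` L = G"
proof
  show "bh ` L \<subseteq> G"
    using min unfolding minimal_class_into_def by blast
  obtain h where h: "h \<in> hcar A" "L = reach_class_of A h"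
    using min unfolding minimal_class_into_def reach_class_iff by blast
  have "h \<in> L"
    using h mem_reach_class_of[OF assms(1)] by blast
  then have G: "G = reach_class_of B (bh h)"
    using min reach_class_eq_reach_class_of[OF assms(2,5)] unfolding minimal_class_into_def by blast
  show "G \<subseteq> bh ` L"
  proof
    fix g assume "g \<in> G"
    then have "reach B g (bh h)"
      unfolding G mem_reach_class_of_iff by simp
    then obtain k where k: "reach A k h" "bh k = g"
      by (rule fa_hom_onto_reach_lift[OF assms(3,4,1) h(1)])
    with \<open>g \<in> G\<close> have "reach_class_of A k = L"
      using minimal_class_into_reach_class_of_eq[OF assms(1,2,3,5) min \<open>h \<in> L\<close>] by blast
    moreover have "k \<in> reach_class_of A k"
      using reach_carrier[OF k(1)] mem_reach_class_of[OF assms(1)] by simp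
    ultimately show "g \<in> bh ` L"
      using k(2) by blast
  qed
qed

lemma minimal_class_into_unique:
  assumes "forest_algebra A" "forest_algebra B" "fa_hom A B bh bv" "reach_class B G"
    and idem: "\<forall>g\<in>hcar B. hadd B g g = g"
    and min: "minimal_class_into A bh G L" and min': "minimal_class_into A bh G L'"
    and "h \<in> L" "h' \<in> L'" "bh h = bh h'"
  shows "L = L'"
proof -
  have hs: "h \<in> hcar A" "h' \<in> hcar A"
    using min min' assms(8,9) unfolding minimal_class_into_def reach_class_iff reach_class_of_def
    by blast+
  define s where "s = hadd A h h'"
  have "bh s = hadd B (bh h) (bh h)"
    using assms(3,10) hs unfolding s_def fa_hom_def by simp
  also have "\<dots> = bh h"
    using idem fa_hom_hcar[OF assms(3) hs(1)] by blast
  finally have "bh s \<in> G"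
    using min assms(8) unfolding minimal_class_into_def by blast
  then have "reach_class_of A s = L" "reach_class_of A s = L'"
    using minimal_class_into_reach_class_of_eq[OF assms(1-4) min assms(8)]
      minimal_class_into_reach_class_of_eq[OF assms(1-4) min' assms(9)]
      reach_hadd[OF assms(1) hs] unfolding s_def by blast+
  then show ?thesis
    by simp
qed

theorem lemma3:
  fixes A1 :: "('h1, 'v1) fa" and A2 :: "('h2, 'v2) fa"
    and bh :: "'h1 \<Rightarrow> 'h2" and bv :: "'v1 \<Rightarrow> 'v2"
    and \<Lambda> :: "'h1 set"
  assumes "finite_forest_algebra A1" and "finite_forest_algebra A2"
    and "fa_hom A1 A2 bh bv"
    and "reach_class A1 \<Lambda>"
  shows "(\<exists>\<Gamma>. reach_class A2 \<Gamma> \<and> bh ` \<Lambda> \<subseteq> \<Gamma>) \<and>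
         (\<forall>\<Gamma>. reach_class A2 \<Gamma> \<and> fa_hom_onto A1 A2 bh bv \<and> minimal_class_into A1 bh \<Gamma> \<Lambda>
              \<longrightarrow> bh ` \<Lambda> = \<Gamma> \<and>
                  (idem_comm_H A2 \<longrightarrow>
                     (\<forall>\<Lambda>'. minimal_class_into A1 bh \<Gamma> \<Lambda>' \<longrightarrow> \<Lambda>' = \<Lambda>)))"
proof (intro conjI allI impI)
  have F1: "forest_algebra A1" and F2: "forest_algebra A2"
    using assms(1,2) unfolding finite_forest_algebra_def by auto
  obtain h where h: "h \<in> hcar A1" "\<Lambda> = reach_class_of A1 h"
    using assms(4) unfolding reach_class_iff by blast
  have "bh h \<in> hcar A2"
    using fa_hom_hcar[OF assms(3) h(1)] .
  then show "\<exists>\<Gamma>. reach_class A2 \<Gamma> \<and> bh ` \<Lambda> \<subseteq> \<Gamma>"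
    using reach_class_reach_class_of fa_hom_image_reach_class_of[OF assms(3), of h] h(2) by metis
  fix \<Gamma>
  assume "reach_class A2 \<Gamma> \<and> fa_hom_onto A1 A2 bh bv \<and> minimal_class_into A1 bh \<Gamma> \<Lambda>"
  then have \<Gamma>: "reach_class A2 \<Gamma>" and onto: "fa_hom_onto A1 A2 bh bv"
    and min: "minimal_class_into A1 bh \<Gamma> \<Lambda>"
    by blast+
  show image: "bh ` \<Lambda> = \<Gamma>"
    using minimal_class_into_image_eq[OF F1 F2 assms(3) onto \<Gamma> min] .
  fix \<Lambda>' assume idem_comm: "idem_comm_H A2" and min': "minimal_class_into A1 bh \<Gamma> \<Lambda>'"
  have "h \<in> \<Lambda>"
    using h mem_reach_class_of[OF F1] by blast
  moreover have "bh ` \<Lambda>' = \<Gamma>"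
    using minimal_class_into_image_eq[OF F1 F2 assms(3) onto \<Gamma> min'] .
  ultimately obtain h' where "h' \<in> \<Lambda>'" "bh h' = bh h"
    using image by (metis imageE imageI)
  moreover have "\<forall>g\<in>hcar A2. hadd A2 g g = g"
    using idem_comm unfolding idem_comm_H_def by blast
  ultimately show "\<Lambda>' = \<Lambda>"
    using minimal_class_into_unique[OF F1 F2 assms(3) \<Gamma> _ min' min] \<open>h \<in> \<Lambda>\<close> by blast
qed

end
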